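(* Let $n_t=2$, $n_r=1$, $R>0$, $\sigma^2>0$, $\rho=1/\sigma^2$, $\overline{P}>0$, and let $h_1,h_2$ be i.i.d. $\mathcal{CN}(0,1)$. Define on $\mathcal{P}_2=\{(p_1,p_2)\in\mathbb{R}_+^2\setminus\{0\}: p_1+p_2\le\overline{P}\}$ $$\Gamma^{\mathrm{TISO}}(p_1,p_2)=\frac{R\left\{1-\Pr\left[\log_2(1+\rho(p_1|h_1|^2+p_2|h_2|^2))<R\right]\right\}}{p_1+p_2}.$$ Then $\Gamma^{\mathrm{TISO}}$ is not quasi-concave on $\mathcal{P}_2$: there exists $\gamma\ge0$ such that the upper level set $\{(p_1,p_2)\in\mathcal{P}_2:\Gamma^{\mathrm{TISO}}(p_1,p_2)\ge\gamma\}$ is not convex. *)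

theory Defs
  imports "HOL-Probability.Probability"
begin

definition CN01 :: "complex measure" where
  "CN01 = density lborel (\<lambda>z. ennreal (exp (- ((cmod z)^2)) / pi))"

definition channel_law :: "(complex \<times> complex) measure" where
  "channel_law = CN01 \<Otimes>\<^sub>M CN01"

definition outage_TISO :: "real \<Rightarrow> real \<Rightarrow> real \<Rightarrow> real \<Rightarrow> real" where
  "outage_TISO R sigma2 p1 p2 =
     measure channel_law
       {h. log 2 (1 + (1 / sigma2) * (p1 * (cmod (fst h))^2 + p2 * (cmod (snd h))^2)) < R}"

definition Gamma_TISO :: "real \<Rightarrow> real \<Rightarrow> real \<Rightarrow> real \<Rightarrow> real" where
  "Gamma_TISO R sigma2 p1 p2 = R * (1 - outage_TISO R sigma2 p1 p2) / (p1 + p2)"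

definition P2 :: "real \<Rightarrow> (real \<times> real) set" where
  "P2 Pbar = {(p1, p2). p1 \<ge> 0 \<and> p2 \<ge> 0 \<and> (p1, p2) \<noteq> (0, 0) \<and> p1 + p2 \<le> Pbar}"

end

theory Submission
  imports Defs "HOL-Real_Asymp.Real_Asymp"
begin

(*
  For h ~ CN(0,1) the power |h|^2 is Exp(1)-distributed, and for
  h1, h2 i.i.d. CN(0,1) the sum |h1|^2 + |h2|^2 has the Erlang tail (1 + c) e^{-c}.
  With the outage threshold t = sigma2 (2^R - 1) > 0 the success probability is
  1 - outage = Pr[p1 |h1|^2 + p2 |h2|^2 >= t].  Hence for p > 0 and u = t / p:
      Gamma(p, 0) = Gamma(0, p) = R e^{-u} / p,
      Gamma(p/2, p/2)          = R (1 + 2u) e^{-2u} / p,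
  and the latter is strictly smaller as soon as 1 + 2u < e^u, e.g. for u > 4.
  Choosing p <= Pbar small enough and gamma = R e^{-u} / p, the upper level set at gamma
  contains (p, 0) and (0, p) but not their midpoint, so it is not convex.
*)

section \<open>Exponential integrals\<close>

lemma nn_integral_exp_tail:
  "(\<integral>\<^sup>+s. ennreal (exp (-s)) * indicator {b..} s \<partial>lborel) = ennreal (exp (-b))"
proof -
  have "(\<integral>\<^sup>+s. ennreal (exp (-s)) * indicator {b..} s \<partial>lborel) = ennreal (0 - (- exp (-b)))"
    by (rule nn_integral_FTC_atLeast[where F="\<lambda>s. - exp (-s)"])
       (auto intro!: derivative_eq_intros, real_asymp)
  then show ?thesis by simp
qed

text \<open>\<open>\<integral>\<^sub>a\<^sup>\<infinity> (s - a) e^{-s} ds = e^{-a}\<close>; this is the weight produced by annuli of area \<open>\<pi>(s - a)\<close>.\<close>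
lemma nn_integral_exp_linear_tail:
  "(\<integral>\<^sup>+s. ennreal (exp (-s) * (s - a)) * indicator {a..} s \<partial>lborel) = ennreal (exp (-a))"
proof -
  have "(\<integral>\<^sup>+s. ennreal (exp (-s) * (s - a)) * indicator {a..} s \<partial>lborel)
        = ennreal (0 - (- (a - a + 1) * exp (-a)))"
    by (rule nn_integral_FTC_atLeast[where F="\<lambda>s. - (s - a + 1) * exp (-s)"])
       (auto intro!: derivative_eq_intros simp: algebra_simps, real_asymp)
  then show ?thesis by simp
qed

text \<open>The elementary inequality that makes the midpoint worse than the vertices.\<close>
lemma exp_gt_one_plus_double:
  fixes u :: real
  assumes "u > 4"
  shows "1 + 2 * u < exp u"
proof -
  have "(1 + u/2)^2 \<le> exp (u/2)^2"
    using assms exp_ge_add_one_self[of "u/2"] by (intro power_mono) auto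
  also have "exp (u/2)^2 = exp u"
    by (simp add: power2_eq_square exp_add[symmetric])
  finally have "(1 + u/2)^2 \<le> exp u" .
  moreover have "4 * u < u * u"
    using assms by (intro mult_strict_right_mono) auto
  ultimately show ?thesis
    by (simp add: power2_eq_square algebra_simps)
qed

section \<open>Discs and annuli in the complex plane\<close>

lemma le_sqrt_iff_power2: "0 \<le> (y::real) \<Longrightarrow> y \<le> sqrt s \<longleftrightarrow> y^2 \<le> s"
  by (metis real_sqrt_abs real_sqrt_le_iff abs_of_nonneg)

lemma less_sqrt_iff_power2: "0 \<le> (y::real) \<Longrightarrow> y < sqrt s \<longleftrightarrow> y^2 < s"
  by (metis real_sqrt_abs real_sqrt_less_iff abs_of_nonneg)

lemma emeasure_disc: "0 \<le> c \<Longrightarrow> emeasure lborel {z::complex. (cmod z)^2 < c} = ennreal (pi * c)"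
proof -
  assume "0 \<le> c"
  moreover have "{z::complex. (cmod z)^2 < c} = ball 0 (sqrt c)"
    by (auto simp: less_sqrt_iff_power2)
  ultimately show ?thesis
    by (simp add: emeasure_ball unit_ball_vol_2)
qed

lemma emeasure_annulus:
  assumes "0 \<le> a" "a \<le> s"
  shows "emeasure lborel {z::complex. a \<le> (cmod z)^2 \<and> (cmod z)^2 \<le> s} = ennreal (pi * (s - a))"
proof -
  have eq: "{z::complex. a \<le> (cmod z)^2 \<and> (cmod z)^2 \<le> s} = cball 0 (sqrt s) - ball 0 (sqrt a)"
    using assms by (auto simp: le_sqrt_iff_power2 less_sqrt_iff_power2 not_less)
  have sub: "ball (0::complex) (sqrt a) \<subseteq> cball 0 (sqrt s)"
    using assms by (auto simp: subset_eq) (meson less_le_trans real_sqrt_le_mono less_imp_le)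
  have "emeasure lborel (cball (0::complex) (sqrt s) - ball 0 (sqrt a))
        = emeasure lborel (cball (0::complex) (sqrt s)) - emeasure lborel (ball (0::complex) (sqrt a))"
    using sub assms by (intro emeasure_Diff) (auto simp: emeasure_ball unit_ball_vol_2)
  also have "\<dots> = ennreal (pi * (s - a))"
    using assms by (simp add: emeasure_cball emeasure_ball unit_ball_vol_2 ennreal_minus algebra_simps)
  finally show ?thesis using eq by simp
qed

section \<open>The power of a CN(0,1) coefficient is Exp(1)-distributed\<close>

lemma space_CN01 [simp]: "space CN01 = UNIV"
  by (simp add: CN01_def)

lemma sets_CN01 [simp, measurable_cong]: "sets CN01 = sets borel"
  by (simp add: CN01_def)

text \<open>Writing the density as
  \<open>e^{-|z|^2} = \<integral>\<^bsub>|z|^2\<^esub>\<^sup>\<infinity> e^{-s} ds\<close> and swapping the integrals reduces this to annulus areas.\<close>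
lemma CN01_power_tail:
  assumes a: "0 \<le> a"
  shows "emeasure CN01 {z. a \<le> (cmod z)^2} = ennreal (exp (-a))"
proof -
  let ?A = "{(z::complex, s::real). a \<le> (cmod z)^2 \<and> (cmod z)^2 \<le> s}"
  have Fubini: "pair_sigma_finite (lborel::complex measure) (lborel::real measure)"
    by (simp add: pair_sigma_finite_def lborel.sigma_finite_measure_axioms)
  have inner_s: "(\<integral>\<^sup>+s. ennreal (exp (-s) / pi) * indicator ?A (z, s) \<partial>lborel)
        = ennreal (exp (- ((cmod z)^2)) / pi) * indicator {z. a \<le> (cmod z)^2} z" for z
  proof -
    have "(\<integral>\<^sup>+s. ennreal (exp (-s) / pi) * indicator ?A (z, s) \<partial>lborel)
        = (\<integral>\<^sup>+s. ennreal (1/pi) * (indicator {z. a \<le> (cmod z)^2} z *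
                 (ennreal (exp (-s)) * indicator {(cmod z)^2..} s)) \<partial>lborel)"
      by (intro nn_integral_cong) (auto split: split_indicator simp: ennreal_mult'[symmetric])
    also have "\<dots> = ennreal (1/pi) * (indicator {z. a \<le> (cmod z)^2} z *
                 (\<integral>\<^sup>+s. ennreal (exp (-s)) * indicator {(cmod z)^2..} s \<partial>lborel))"
      by (simp add: nn_integral_cmult)
    also have "\<dots> = ennreal (1/pi) * ennreal (exp (- ((cmod z)^2))) * indicator {z. a \<le> (cmod z)^2} z"
      by (simp add: nn_integral_exp_tail ac_simps)
    finally show ?thesis
      by (simp add: ennreal_mult[symmetric])
  qed
  have inner_z: "(\<integral>\<^sup>+z. ennreal (exp (-s) / pi) * indicator ?A (z, s) \<partial>lborel)
        = ennreal (exp (-s) * (s - a)) * indicator {a..} s" for s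
  proof -
    have "(\<integral>\<^sup>+z. ennreal (exp (-s) / pi) * indicator ?A (z, s) \<partial>lborel)
        = ennreal (exp (-s) / pi) * emeasure lborel {z::complex. a \<le> (cmod z)^2 \<and> (cmod z)^2 \<le> s}"
      by (subst nn_integral_cmult_indicator[symmetric]) (auto intro!: nn_integral_cong split: split_indicator)
    also have "\<dots> = ennreal (exp (-s) * (s - a)) * indicator {a..} s"
    proof (cases "a \<le> s")
      case False
      then have empty: "{z::complex. a \<le> (cmod z)^2 \<and> (cmod z)^2 \<le> s} = {}" by auto
      show ?thesis using False by (simp only: empty emeasure_empty) simp
    qed (use a in \<open>simp add: emeasure_annulus ennreal_mult'[symmetric]\<close>)
    finally show ?thesis .
  qed
  have "emeasure CN01 {z. a \<le> (cmod z)^2}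
        = (\<integral>\<^sup>+z. ennreal (exp (- ((cmod z)^2)) / pi) * indicator {z. a \<le> (cmod z)^2} z \<partial>lborel)"
    unfolding CN01_def by (simp add: emeasure_density)
  also have "\<dots> = (\<integral>\<^sup>+z. \<integral>\<^sup>+s. ennreal (exp (-s) / pi) * indicator ?A (z, s) \<partial>lborel \<partial>lborel)"
    by (simp add: inner_s)
  also have "\<dots> = (\<integral>\<^sup>+s. \<integral>\<^sup>+z. ennreal (exp (-s) / pi) * indicator ?A (z, s) \<partial>lborel \<partial>lborel)"
    by (rule pair_sigma_finite.Fubini'[OF Fubini, symmetric]) measurable
  also have "\<dots> = ennreal (exp (-a))"
    by (simp add: inner_z nn_integral_exp_linear_tail)
  finally show ?thesis .
qed

lemma prob_space_CN01: "prob_space CN01"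
proof
  have "{z. 0 \<le> (cmod z)^2} = UNIV" by auto
  then show "emeasure CN01 (space CN01) = 1"
    using CN01_power_tail[of 0] by simp
qed

text \<open>The same tail for an arbitrary threshold, as needed when conditioning on \<open>h1\<close>.\<close>
lemma CN01_power_tail_max: "emeasure CN01 {z. a \<le> (cmod z)^2} = ennreal (exp (- max a 0))"
proof (cases "0 \<le> a")
  case False
  then have "{z. a \<le> (cmod z)^2} = space CN01" by (auto intro: order_trans[of _ 0])
  then show ?thesis
    using False prob_space.emeasure_space_1[OF prob_space_CN01] by simp
qed (simp add: CN01_power_tail)

text \<open>\<open>E[e^{|h|^2 - c}; |h|^2 < c] = c e^{-c}\<close>: the density becomes constant on the disc.\<close>
lemma CN01_weighted_disc:
  assumes c: "0 \<le> c"
  shows "(\<integral>\<^sup>+z. indicator {z. (cmod z)^2 < c} z * ennreal (exp ((cmod z)^2 - c)) \<partial>CN01)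
         = ennreal (c * exp (-c))"
proof -
  have "(\<integral>\<^sup>+z. indicator {z. (cmod z)^2 < c} z * ennreal (exp ((cmod z)^2 - c)) \<partial>CN01)
      = (\<integral>\<^sup>+z. ennreal (exp (- ((cmod z)^2)) / pi) *
            (indicator {z. (cmod z)^2 < c} z * ennreal (exp ((cmod z)^2 - c))) \<partial>lborel)"
    unfolding CN01_def by (rule nn_integral_density) measurable
  also have "\<dots> = (\<integral>\<^sup>+z. ennreal (exp (-c) / pi) * indicator {z::complex. (cmod z)^2 < c} z \<partial>lborel)"
  proof (rule nn_integral_cong)
    fix z :: complex
    have "exp (- ((cmod z)^2)) / pi * exp ((cmod z)^2 - c) = exp (-c) / pi"
      by (simp add: exp_add[symmetric])
    then show "ennreal (exp (- ((cmod z)^2)) / pi) *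
            (indicator {z. (cmod z)^2 < c} z * ennreal (exp ((cmod z)^2 - c)))
          = ennreal (exp (-c) / pi) * indicator {z::complex. (cmod z)^2 < c} z"
      by (auto split: split_indicator simp: ennreal_mult'[symmetric])
  qed
  also have "\<dots> = ennreal (exp (-c) / pi) * emeasure lborel {z::complex. (cmod z)^2 < c}"
    by (rule nn_integral_cmult_indicator) measurable
  also have "\<dots> = ennreal (c * exp (-c))"
    using c by (simp add: emeasure_disc ennreal_mult'[symmetric])
  finally show ?thesis .
qed

lemma prob_space_channel_law: "prob_space channel_law"
  unfolding channel_law_def by (intro prob_space_pair prob_space_CN01)

lemma space_channel_law [simp]: "space channel_law = UNIV"
  by (simp add: channel_law_def space_pair_measure)

lemma sets_channel_law:
  "sets channel_law = sets (borel \<Otimes>\<^sub>M (borel::complex measure))"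
  unfolding channel_law_def by (intro sets_pair_measure_cong) simp_all

lemma pred_sets_channel_law:
  "Measurable.pred (borel \<Otimes>\<^sub>M borel) P \<Longrightarrow> {h. P h} \<in> sets channel_law"
  using measurable_sets[of P "borel \<Otimes>\<^sub>M borel" "count_space UNIV" "{True}"]
  by (simp add: sets_channel_law space_pair_measure vimage_def)

lemma channel_law_coordinate_tails:
  assumes "0 \<le> u"
  shows "measure channel_law ({z. u \<le> (cmod z)^2} \<times> UNIV) = exp (-u)"
    and "measure channel_law (UNIV \<times> {z. u \<le> (cmod z)^2}) = exp (-u)"
proof -
  interpret CN01: prob_space CN01 by (rule prob_space_CN01)
  have tail: "emeasure CN01 {z. u \<le> (cmod z)^2} = ennreal (exp (-u))"
    using assms by (rule CN01_power_tail)
  have "{z. u \<le> (cmod z)^2} \<in> sets CN01" by measurable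
  then show "measure channel_law ({z. u \<le> (cmod z)^2} \<times> UNIV) = exp (-u)"
       and "measure channel_law (UNIV \<times> {z. u \<le> (cmod z)^2}) = exp (-u)"
    unfolding channel_law_def measure_def
    by (simp_all add: CN01.emeasure_pair_measure_Times tail CN01.emeasure_space_1[simplified])
qed

text \<open>Erlang tail: \<open>Pr[|h1|^2 + |h2|^2 \<ge> c] = (1 + c) e^{-c}\<close>, by conditioning on \<open>h1\<close>.\<close>
lemma channel_law_sum_tail:
  assumes c: "0 \<le> c"
  shows "measure channel_law {h. c \<le> (cmod (fst h))^2 + (cmod (snd h))^2} = (1 + c) * exp (-c)"
proof -
  interpret CN01: prob_space CN01 by (rule prob_space_CN01)
  let ?E = "{h::complex \<times> complex. c \<le> (cmod (fst h))^2 + (cmod (snd h))^2}"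
  have section_prob: "emeasure CN01 (Pair x -` ?E)
      = indicator {z. (cmod z)^2 < c} x * ennreal (exp ((cmod x)^2 - c))
        + indicator {z. c \<le> (cmod z)^2} x" for x
  proof -
    have "Pair x -` ?E = {z. c - (cmod x)^2 \<le> (cmod z)^2}" by auto
    then show ?thesis
      by (auto simp: CN01_power_tail_max max_def split: split_indicator)
  qed
  have "?E \<in> sets channel_law" by (rule pred_sets_channel_law) measurable
  then have "emeasure channel_law ?E = (\<integral>\<^sup>+x. emeasure CN01 (Pair x -` ?E) \<partial>CN01)"
    unfolding channel_law_def by (rule CN01.emeasure_pair_measure_alt)
  also have "\<dots> = (\<integral>\<^sup>+x. indicator {z. (cmod z)^2 < c} x * ennreal (exp ((cmod x)^2 - c)) \<partial>CN01)
                 + (\<integral>\<^sup>+x. indicator {z. c \<le> (cmod z)^2} x \<partial>CN01)"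
    unfolding section_prob by (rule nn_integral_add) measurable
  also have "\<dots> = ennreal (c * exp (-c)) + ennreal (exp (-c))"
    using c by (simp add: CN01_weighted_disc CN01_power_tail)
  also have "\<dots> = ennreal ((1 + c) * exp (-c))"
    using c by (simp add: ennreal_plus[symmetric] algebra_simps del: ennreal_plus)
  finally show ?thesis
    using c by (simp add: measure_def)
qed

section \<open>Energy efficiency through the success probability\<close>

text \<open>Received-power threshold \<open>t = \<sigma>^2 (2^R - 1)\<close>: the rate \<open>R\<close> is supported iff the received power reaches \<open>t\<close>.\<close>
definition outage_threshold :: "real \<Rightarrow> real \<Rightarrow> real" where
  "outage_threshold R sigma2 = sigma2 * (2 powr R - 1)"

lemma outage_threshold_pos: "0 < R \<Longrightarrow> 0 < sigma2 \<Longrightarrow> 0 < outage_threshold R sigma2"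
  by (simp add: outage_threshold_def)

lemma rate_below_iff:
  assumes "sigma2 > 0" and "0 \<le> x"
  shows "log 2 (1 + (1 / sigma2) * x) < R \<longleftrightarrow> x < outage_threshold R sigma2"
proof -
  have "0 < 1 + (1 / sigma2) * x" using assms by (simp add: add_pos_nonneg)
  then have "log 2 (1 + (1 / sigma2) * x) < R \<longleftrightarrow> 1 + (1 / sigma2) * x < 2 powr R"
    by (intro log_less_iff) auto
  also have "\<dots> \<longleftrightarrow> x < outage_threshold R sigma2"
    using assms(1) by (simp add: outage_threshold_def field_simps)
  finally show ?thesis .
qed

lemma Gamma_TISO_success:
  assumes "sigma2 > 0" "0 \<le> p1" "0 \<le> p2"
  shows "Gamma_TISO R sigma2 p1 p2 = R * measure channel_law
           {h. outage_threshold R sigma2 \<le> p1 * (cmod (fst h))^2 + p2 * (cmod (snd h))^2} / (p1 + p2)"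
proof -
  interpret CL: prob_space channel_law by (rule prob_space_channel_law)
  let ?S = "{h. outage_threshold R sigma2 \<le> p1 * (cmod (fst h))^2 + p2 * (cmod (snd h))^2}"
  have "{h. log 2 (1 + (1 / sigma2) * (p1 * (cmod (fst h))^2 + p2 * (cmod (snd h))^2)) < R}
        = space channel_law - ?S"
    using assms rate_below_iff[OF assms(1)] by (auto simp: not_le)
  moreover have "?S \<in> sets channel_law" by (rule pred_sets_channel_law) measurable
  ultimately have "outage_TISO R sigma2 p1 p2 = 1 - CL.prob ?S"
    by (simp add: outage_TISO_def CL.prob_compl[simplified])
  then show ?thesis by (simp add: Gamma_TISO_def)
qed

lemma Gamma_TISO_single_antenna:
  assumes "R > 0" "sigma2 > 0" "0 < p"
  shows "Gamma_TISO R sigma2 p 0 = R * exp (- (outage_threshold R sigma2 / p)) / p"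
    and "Gamma_TISO R sigma2 0 p = R * exp (- (outage_threshold R sigma2 / p)) / p"
proof -
  let ?t = "outage_threshold R sigma2"
  have scale: "?t \<le> p * x \<longleftrightarrow> ?t / p \<le> x" for x
    using assms(3) by (simp add: pos_divide_le_eq mult.commute)
  have u: "0 \<le> ?t / p"
    using assms by (simp add: outage_threshold_pos less_imp_le)
  have "{h. ?t \<le> p * (cmod (fst h))^2 + 0 * (cmod (snd h))^2} = {z. ?t / p \<le> (cmod z)^2} \<times> UNIV"
    by (auto simp: scale)
  then show "Gamma_TISO R sigma2 p 0 = R * exp (- (?t / p)) / p"
    using assms u by (simp add: Gamma_TISO_success channel_law_coordinate_tails)
  have "{h. ?t \<le> 0 * (cmod (fst h))^2 + p * (cmod (snd h))^2} = UNIV \<times> {z. ?t / p \<le> (cmod z)^2}"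
    by (auto simp: scale)
  then show "Gamma_TISO R sigma2 0 p = R * exp (- (?t / p)) / p"
    using assms u by (simp add: Gamma_TISO_success channel_law_coordinate_tails)
qed

lemma Gamma_TISO_equal_split:
  assumes "R > 0" "sigma2 > 0" "0 < p"
  defines "u \<equiv> outage_threshold R sigma2 / p"
  shows "Gamma_TISO R sigma2 (p/2) (p/2) = R * ((1 + 2 * u) * exp (- (2 * u))) / p"
proof -
  have "outage_threshold R sigma2 \<le> p/2 * x + p/2 * y \<longleftrightarrow> 2 * u \<le> x + y" for x y
    using assms(3) unfolding u_def by (simp add: field_simps)
  then have "{h. outage_threshold R sigma2 \<le> p/2 * (cmod (fst h))^2 + p/2 * (cmod (snd h))^2}
             = {h. 2 * u \<le> (cmod (fst h))^2 + (cmod (snd h))^2}"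
    by auto
  moreover have "0 \<le> 2 * u"
    using assms by (simp add: u_def outage_threshold_pos less_imp_le)
  ultimately show ?thesis
    using assms by (simp add: Gamma_TISO_success channel_law_sum_tail)
qed

theorem mainTheorem8:
  fixes R sigma2 Pbar :: real
  assumes "R > 0" and "sigma2 > 0" and "Pbar > 0"
  shows "\<exists>\<gamma>\<ge>0. \<not> convex {p \<in> P2 Pbar. Gamma_TISO R sigma2 (fst p) (snd p) \<ge> \<gamma>}"
proof -
  define t where "t = outage_threshold R sigma2"
  define p where "p = min Pbar (t / 5)"
  define u where "u = t / p"
  define \<gamma> where "\<gamma> = R * exp (-u) / p"
  define S where "S = {q \<in> P2 Pbar. Gamma_TISO R sigma2 (fst q) (snd q) \<ge> \<gamma>}"
  have "t > 0" using assms by (simp add: t_def outage_threshold_pos)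
  then have p: "0 < p" "p \<le> Pbar" "p \<le> t / 5" using assms(3) by (auto simp: p_def)
  then have "u > 4" by (simp add: u_def field_simps)
  then have "(1 + 2 * u) * exp (- (2 * u)) < exp u * exp (- (2 * u))"
    using exp_gt_one_plus_double by simp
  also have "\<dots> = exp (-u)" by (simp flip: exp_add)
  finally have "(1 + 2 * u) * exp (- (2 * u)) < exp (-u)" .
  then have "Gamma_TISO R sigma2 (p/2) (p/2) < \<gamma>"
    using assms p by (simp add: Gamma_TISO_equal_split \<gamma>_def u_def t_def divide_strict_right_mono)
  moreover have "(p, 0) \<in> S" "(0, p) \<in> S"
    using assms p by (simp_all add: S_def P2_def \<gamma>_def u_def t_def Gamma_TISO_single_antenna)
  ultimately have "\<not> convex S"
    using convexD[of S "(p, 0)" "(0, p)" "1/2" "1/2"] by (auto simp: S_def)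
  moreover have "\<gamma> \<ge> 0" using assms p by (simp add: \<gamma>_def)
  ultimately show ?thesis unfolding S_def by blast
qed

end
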